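(* Let $\mathcal{V}_t$ be a variety of $\Omega$-algebras (of a plural type) satisfying the identity $t(x,y)=x$ for some $t\in T_2$, and let $\Sigma$ be an equational base for $\mathcal{V}_t$. Then the Mal'tsev product $\mathcal{V}_t\circ\mathcal{S}$ is a variety; in fact $\mathcal{V}_t\circ\mathcal{S}=\mathcal{V}_t^{\,p}$, and $\Sigma^p$ is an equational base for $\mathcal{V}_t\circ\mathcal{S}$.
   Context: Standing conventions: $\Omega$-algebras are of a plural similarity type, i.e. there are no nullary operation symbols and at least one operation symbol of arity $\ge 2$. For $n\ge 1$, $T_n$ denotes the set of $\Omega$-terms in the variables $x_1,\dots,x_n$ in which each of these $n$ variables actually occurs. An identity is regular if exactly the same variables occur on both sides. $\mathcal{S}$ denotes the variety of $\Omega$-semilattices: all $\Omega$-algebras of the given type satisfying every regular identity (in such an algebra any term in $T_2$ is a semilattice operation, and every basic $n$-ary operation equals the $n$-fold product in this semilattice). For a class $\mathcal{V}$ of $\Omega$-algebras, the Mal'tsev product $\mathcal{V}\circ\mathcal{S}$ is the class of all $\Omega$-algebras $A$ having a congruence $\theta$ such that $A/\theta\in\mathcal{S}$ and every $\theta$-class (which is a subalgebra, since $\mathcal{S}$ is idempotent) belongs to $\mathcal{V}$; such $A$ is called a semilattice sum of $\mathcal{V}$-algebras. Prolongation: for an identity $\sigma$ of the form $u(y_1,\dots,y_n)=v(y_1,\dots,y_n)$ (where the variables of the terms $u,v$ are among $y_1,\dots,y_n$, not necessarily all occurring) and $m\ge1$, let $\sigma^p_m$ be the set of all identities $u(r_1,\dots,r_n)=v(r_1,\dots,r_n)$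 obtained by substituting $r_i(x_1,\dots,x_m)$ for $y_i$, where $r_1,\dots,r_n$ range over $T_m$. Let $\sigma^p=\bigcup_{m>0}\sigma^p_m$, and for a set $\Sigma$ of identities $\Sigma^p=\bigcup_{\sigma\in\Sigma}\sigma^p$. For a variety $\mathcal{V}$, its prolongation $\mathcal{V}^p$ is the variety defined by $\mathrm{Id}(\mathcal{V})^p$, where $\mathrm{Id}(\mathcal{V})$ is the set of all identities holding in $\mathcal{V}$. *)

theory Defs
  imports Main
begin

section \<open>Terms over a signature given by an arity function (variables x_1, x_2, ... are Var 1, Var 2, ...)\<close>

datatype 'f trm = Var nat | Op 'f "'f trm list"

fun vars :: "'f trm \<Rightarrow> nat set" where
  "vars (Var i) = {i}"
| "vars (Op f ts) = (\<Union>t\<in>set ts. vars t)"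

fun wf_trm :: "('f \<Rightarrow> nat) \<Rightarrow> 'f trm \<Rightarrow> bool" where
  "wf_trm ar (Var i) = True"
| "wf_trm ar (Op f ts) = (length ts = ar f \<and> (\<forall>t\<in>set ts. wf_trm ar t))"

fun eval :: "('f \<Rightarrow> 'a list \<Rightarrow> 'a) \<Rightarrow> (nat \<Rightarrow> 'a) \<Rightarrow> 'f trm \<Rightarrow> 'a" where
  "eval ops env (Var i) = env i"
| "eval ops env (Op f ts) = ops f (map (eval ops env) ts)"

fun subst :: "(nat \<Rightarrow> 'f trm) \<Rightarrow> 'f trm \<Rightarrow> 'f trm" where
  "subst r (Var i) = r i"
| "subst r (Op f ts) = Op f (map (subst r) ts)"

definition T :: "('f \<Rightarrow> nat) \<Rightarrow> nat \<Rightarrow> 'f trm set" where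
  "T ar n = {t. wf_trm ar t \<and> vars t = {1..n}}"

definition idents :: "('f \<Rightarrow> nat) \<Rightarrow> ('f trm \<times> 'f trm) set" where
  "idents ar = {(u, v). wf_trm ar u \<and> wf_trm ar v}"

definition regular_idents :: "('f \<Rightarrow> nat) \<Rightarrow> ('f trm \<times> 'f trm) set" where
  "regular_idents ar = {(u, v). wf_trm ar u \<and> wf_trm ar v \<and> vars u = vars v}"

definition is_alg :: "('f \<Rightarrow> nat) \<Rightarrow> 'a set \<Rightarrow> ('f \<Rightarrow> 'a list \<Rightarrow> 'a) \<Rightarrow> bool" where
  "is_alg ar A ops = (\<forall>f xs. length xs = ar f \<and> set xs \<subseteq> A \<longrightarrow> ops f xs \<in> A)"

definition holds :: "'a set \<Rightarrow> ('f \<Rightarrow> 'a list \<Rightarrow> 'a) \<Rightarrow> 'f trm \<times> 'f trm \<Rightarrow> bool" where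
  "holds A ops e = (\<forall>env. (\<forall>i. env i \<in> A) \<longrightarrow> eval ops env (fst e) = eval ops env (snd e))"

definition models :: "('f \<Rightarrow> nat) \<Rightarrow> 'a set \<Rightarrow> ('f \<Rightarrow> 'a list \<Rightarrow> 'a) \<Rightarrow> ('f trm \<times> 'f trm) set \<Rightarrow> bool" where
  "models ar A ops E = (is_alg ar A ops \<and> (\<forall>e\<in>E. holds A ops e))"

definition is_semilattice :: "('f \<Rightarrow> nat) \<Rightarrow> 'a set \<Rightarrow> ('f \<Rightarrow> 'a list \<Rightarrow> 'a) \<Rightarrow> bool" where
  "is_semilattice ar A ops = models ar A ops (regular_idents ar)"

text \<open>Models are taken with
  carrier type 'f trm set, which is large enough to contain (a copy of) the free
  algebra of countable rank, so by Birkhoff this is exactly Id(Mod E).\<close>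
definition Id_of :: "('f \<Rightarrow> nat) \<Rightarrow> ('f trm \<times> 'f trm) set \<Rightarrow> ('f trm \<times> 'f trm) set" where
  "Id_of ar E = {e \<in> idents ar.
     \<forall>(B :: 'f trm set set) opsB. models ar B opsB E \<longrightarrow> holds B opsB e}"

definition congruence :: "('f \<Rightarrow> nat) \<Rightarrow> 'a set \<Rightarrow> ('f \<Rightarrow> 'a list \<Rightarrow> 'a) \<Rightarrow> 'a rel \<Rightarrow> bool" where
  "congruence ar A ops \<theta> = (equiv A \<theta> \<and>
     (\<forall>f xs ys. length xs = ar f \<and> length ys = ar f \<and> set xs \<subseteq> A \<and> set ys \<subseteq> A \<and>
        list_all2 (\<lambda>x y. (x, y) \<in> \<theta>) xs ys \<longrightarrow> (ops f xs, ops f ys) \<in> \<theta>))"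

definition quot_ops :: "'a rel \<Rightarrow> ('f \<Rightarrow> 'a list \<Rightarrow> 'a) \<Rightarrow> 'f \<Rightarrow> 'a set list \<Rightarrow> 'a set" where
  "quot_ops \<theta> ops f Xs = \<theta> `` {ops f (map (\<lambda>X. SOME x. x \<in> X) Xs)}"

definition malcev_S :: "('f \<Rightarrow> nat) \<Rightarrow> ('f trm \<times> 'f trm) set \<Rightarrow> 'a set \<Rightarrow> ('f \<Rightarrow> 'a list \<Rightarrow> 'a) \<Rightarrow> bool" where
  "malcev_S ar E A ops = (is_alg ar A ops \<and>
     (\<exists>\<theta>. congruence ar A ops \<theta> \<and> is_semilattice ar (A // \<theta>) (quot_ops \<theta> ops) \<and>
          (\<forall>X \<in> A // \<theta>. models ar X ops E)))"

definition prolong :: "('f \<Rightarrow> nat) \<Rightarrow> ('f trm \<times> 'f trm) set \<Rightarrow> ('f trm \<times> 'f trm) set" where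
  "prolong ar E = {(subst r u, subst r v) | u v r m. (u, v) \<in> E \<and> m > 0 \<and>
      (\<forall>i \<in> vars u \<union> vars v. r i \<in> T ar m)}"

end

theory Submission
  imports Defs
begin

(* If A is a semilattice sum of V_t-algebras, every prolonged identity u(r_1,...,r_n) = v(r_1,...,r_n)
   holds in A: the r_i all have the variables x_1,...,x_m, so they coincide in the semilattice
   quotient; hence their values lie in one class, which satisfies u = v.

   Conversely, let A satisfy Sigma^p. For a valuation c, the values of the terms of T_m form a
   subalgebra satisfying Sigma (an identity of Sigma, with its variables replaced by terms of T_m,
   is in Sigma^p), so t(a,b) = a there. The relation a ~ b iff t(a,b) = a and t(b,a) = b therefore
   relates the values of any two terms with the same variables. This makes ~ a congruence with
   semilattice quotient, and each ~-class satisfies Sigma: inside a class a variable x_i can be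
   replaced by the term t(x_i, W) of T_m, turning the identities of Sigma into ones of Sigma^p. *)

lemma eval_subst: "eval ops env (subst \<sigma> p) = eval ops (\<lambda>i. eval ops env (\<sigma> i)) p"
  by (induction p) (auto cong: map_cong)

lemma eval_Op: "eval Op env p = subst env p"
  by (induction p) auto

lemma vars_subst: "vars (subst \<sigma> p) = (\<Union>i\<in>vars p. vars (\<sigma> i))"
  by (induction p) auto

lemma subst_Var: "subst Var p = p"
  by (induction p) (auto simp: map_idI)

lemma wf_subst: "wf_trm ar p \<Longrightarrow> (\<And>i. i \<in> vars p \<Longrightarrow> wf_trm ar (\<sigma> i)) \<Longrightarrow> wf_trm ar (subst \<sigma> p)"
  by (induction p) auto

lemma eval_cong: "(\<And>i. i \<in> vars p \<Longrightarrow> env i = env' i) \<Longrightarrow> eval ops env p = eval ops env' p"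
proof (induction p)
  case (Op f ts)
  then have "map (eval ops env) ts = map (eval ops env') ts"
    by (intro map_cong) auto
  then show ?case by (simp only: eval.simps)
qed simp

lemma finite_vars: "finite (vars p)"
  by (induction p) auto

lemma vars_nonempty:
  assumes "\<forall>f. ar f \<ge> 1" and "wf_trm ar p"
  shows "vars p \<noteq> {}"
  using assms(2)
proof (induction p)
  case (Op f ts)
  then obtain s where "s \<in> set ts"
    using assms(1) by (metis length_0_conv list.set_sel(1) not_one_le_zero wf_trm.simps(2))
  with Op show ?case by auto
qed simp

lemma eval_closed:
  "is_alg ar A ops \<Longrightarrow> wf_trm ar p \<Longrightarrow> (\<And>i. env i \<in> A) \<Longrightarrow> eval ops env p \<in> A"
  by (induction p) (simp_all add: is_alg_def image_subset_iff)

lemma is_alg_terms: "is_alg ar {s. wf_trm ar s} Op"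
  by (auto simp: is_alg_def)

lemma models_eval_eq:
  "models ar A ops E \<Longrightarrow> (u, v) \<in> E \<Longrightarrow> (\<And>i. env i \<in> A) \<Longrightarrow> eval ops env u = eval ops env v"
  unfolding models_def holds_def by fastforce

lemma models_antimono: "models ar A ops E' \<Longrightarrow> E \<subseteq> E' \<Longrightarrow> models ar A ops E"
  unfolding models_def by auto

lemma prolongI:
  "(u, v) \<in> E \<Longrightarrow> m > 0 \<Longrightarrow> (\<And>i. i \<in> vars u \<union> vars v \<Longrightarrow> r i \<in> T ar m)
   \<Longrightarrow> (subst r u, subst r v) \<in> prolong ar E"
  unfolding prolong_def by blast

lemma prolong_mono: "E \<subseteq> E' \<Longrightarrow> prolong ar E \<subseteq> prolong ar E'"
  unfolding prolong_def by blast

lemma subset_Id_of: "E \<subseteq> idents ar \<Longrightarrow> E \<subseteq> Id_of ar E"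
  unfolding Id_of_def models_def by blast

lemma quot_ops_classes:
  assumes cong: "congruence ar A ops \<theta>"
    and xs: "length xs = ar f" "set xs \<subseteq> A"
  shows "quot_ops \<theta> ops f (map (\<lambda>x. \<theta> `` {x}) xs) = \<theta> `` {ops f xs}"
proof -
  have eqv: "equiv A \<theta>" using cong by (simp add: congruence_def)
  define ys where "ys = map (\<lambda>x. SOME y. (x, y) \<in> \<theta>) xs"
  have rel: "(x, SOME y. (x, y) \<in> \<theta>) \<in> \<theta>" if "x \<in> A" for x
    using someI[of "\<lambda>y. (x, y) \<in> \<theta>", OF equiv_class_self[OF eqv that, simplified]] .
  have "list_all2 (\<lambda>x y. (x, y) \<in> \<theta>) xs ys"
    using rel xs unfolding ys_def list_all2_map2 list_all2_same by auto
  moreover have "set ys \<subseteq> A"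
    using rel xs eqv by (auto simp: ys_def equiv_def)
  ultimately have "(ops f xs, ops f ys) \<in> \<theta>"
    using cong xs unfolding congruence_def ys_def by auto
  then show ?thesis
    using eqv by (simp add: quot_ops_def ys_def comp_def equiv_class_eq)
qed

lemma eval_quotient:
  assumes "congruence ar A ops \<theta>" "is_alg ar A ops" "wf_trm ar p" "\<And>i. env i \<in> A"
  shows "eval (quot_ops \<theta> ops) (\<lambda>i. \<theta> `` {env i}) p = \<theta> `` {eval ops env p}"
  using assms(3)
proof (induction p)
  case (Op f ts)
  then have "eval (quot_ops \<theta> ops) (\<lambda>i. \<theta> `` {env i}) (Op f ts)
      = quot_ops \<theta> ops f (map (\<lambda>x. \<theta> `` {x}) (map (eval ops env) ts))"
    by (simp add: comp_def cong: map_cong)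
  also have "\<dots> = \<theta> `` {ops f (map (eval ops env) ts)}"
    using Op.prems eval_closed[OF assms(2) _ assms(4)] by (intro quot_ops_classes[OF assms(1)]) auto
  finally show ?case by simp
qed simp

lemma quotient_env_reps:
  assumes "\<And>i. envQ i \<in> A // \<theta>"
  obtains env where "\<And>i. env i \<in> A" "envQ = (\<lambda>i. \<theta> `` {env i})"
proof -
  have "\<forall>i. \<exists>x. x \<in> A \<and> envQ i = \<theta> `` {x}"
    using assms by (auto elim!: quotientE)
  then show ?thesis
    using that by metis
qed

lemma is_alg_quotient:
  assumes "is_alg ar A ops" "congruence ar A ops \<theta>"
  shows "is_alg ar (A // \<theta>) (quot_ops \<theta> ops)"
  unfolding is_alg_def
proof (intro allI impI)
  fix f Xs assume Xs: "length Xs = ar f \<and> set Xs \<subseteq> A // \<theta>"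
  have eqv: "equiv A \<theta>" using assms(2) by (simp add: congruence_def)
  have "(SOME x. x \<in> X) \<in> A" if "X \<in> A // \<theta>" for X
    using that eqv by (metis equiv_class_self in_quotient_imp_subset quotientE someI subsetD)
  then have "ops f (map (\<lambda>X. SOME x. x \<in> X) Xs) \<in> A"
    using Xs by (intro assms(1)[unfolded is_alg_def, rule_format]) auto
  then show "quot_ops \<theta> ops f Xs \<in> A // \<theta>"
    by (simp add: quot_ops_def quotientI)
qed

lemma holds_quotient_iff:
  assumes cong: "congruence ar A ops \<theta>" and alg: "is_alg ar A ops"
    and wf: "wf_trm ar u" "wf_trm ar v"
  shows "holds (A // \<theta>) (quot_ops \<theta> ops) (u, v)
    \<longleftrightarrow> (\<forall>env. (\<forall>i. env i \<in> A) \<longrightarrow> (eval ops env u, eval ops env v) \<in> \<theta>)"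
proof -
  have eqv: "equiv A \<theta>" using cong by (simp add: congruence_def)
  have on_classes: "eval (quot_ops \<theta> ops) (\<lambda>i. \<theta> `` {env i}) u = eval (quot_ops \<theta> ops) (\<lambda>i. \<theta> `` {env i}) v
      \<longleftrightarrow> (eval ops env u, eval ops env v) \<in> \<theta>" if "\<And>i. env i \<in> A" for env
    using that eqv eval_closed[OF alg] wf
    by (simp add: eval_quotient[OF cong alg] equiv_class_eq_iff)
  show ?thesis
    unfolding holds_def fst_conv snd_conv
  proof (intro iffI allI impI)
    fix env :: "nat \<Rightarrow> _"
    assume in_quotient: "\<forall>envQ. (\<forall>i. envQ i \<in> A // \<theta>) \<longrightarrow>
        eval (quot_ops \<theta> ops) envQ u = eval (quot_ops \<theta> ops) envQ v"
      and env: "\<forall>i. env i \<in> A"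
    have "\<theta> `` {env i} \<in> A // \<theta>" for i
      using env by (simp add: quotientI)
    then have "eval (quot_ops \<theta> ops) (\<lambda>i. \<theta> `` {env i}) u
        = eval (quot_ops \<theta> ops) (\<lambda>i. \<theta> `` {env i}) v"
      by (rule in_quotient[rule_format])
    then show "(eval ops env u, eval ops env v) \<in> \<theta>"
      using on_classes[of env] env by simp
  next
    fix envQ :: "nat \<Rightarrow> _"
    assume related: "\<forall>env. (\<forall>i. env i \<in> A) \<longrightarrow> (eval ops env u, eval ops env v) \<in> \<theta>"
      and "\<forall>i. envQ i \<in> A // \<theta>"
    then obtain env where env: "\<And>i. env i \<in> A" and "envQ = (\<lambda>i. \<theta> `` {env i})"
      by (metis quotient_env_reps)
    then show "eval (quot_ops \<theta> ops) envQ u = eval (quot_ops \<theta> ops) envQ v"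
      using on_classes[of env] related by simp
  qed
qed

section \<open>Transfer of identities\<close>

definition idents_of ::
    "('f \<Rightarrow> nat) \<Rightarrow> ('a set \<Rightarrow> ('f \<Rightarrow> 'a list \<Rightarrow> 'a) \<Rightarrow> bool) \<Rightarrow> ('f trm \<times> 'f trm) set"
  where "idents_of ar K = {e \<in> idents ar. \<forall>B opsB. K B opsB \<longrightarrow> holds B opsB e}"

lemma congruence_idents_of: "congruence ar {s. wf_trm ar s} Op (idents_of ar K)"
  unfolding congruence_def
proof (intro conjI allI impI)
  show "equiv {s. wf_trm ar s} (idents_of ar K)"
    unfolding idents_of_def idents_def holds_def
    by (rule equivI) (fastforce simp: refl_on_def intro!: symI transI)+
next
  fix f xs ys
  assume "length xs = ar f \<and> length ys = ar f \<and> set xs \<subseteq> {s. wf_trm ar s} \<and> set ys \<subseteq> {s. wf_trm ar s}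
    \<and> list_all2 (\<lambda>x y. (x, y) \<in> idents_of ar K) xs ys"
  then have "map (eval opsB env) xs = map (eval opsB env) ys"
    if "K B opsB" "\<forall>i. env i \<in> B" for B opsB env
    using that by (auto simp: list_all2_conv_all_nth idents_of_def holds_def intro: nth_equalityI)
  then show "(Op f xs, Op f ys) \<in> idents_of ar K"
    using \<open>length xs = ar f \<and> _\<close> by (auto simp: idents_of_def idents_def holds_def)
qed

lemma holds_term_quotient:
  assumes algs: "\<And>B opsB. K B opsB \<Longrightarrow> is_alg ar B opsB" and e: "e \<in> idents_of ar K"
  shows "holds ({s. wf_trm ar s} // idents_of ar K) (quot_ops (idents_of ar K) Op) e"
proof -
  obtain u v where uv: "e = (u, v)" "wf_trm ar u" "wf_trm ar v"
    using e by (auto simp: idents_of_def idents_def)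
  have "(subst env u, subst env v) \<in> idents_of ar K" if env: "\<forall>i. wf_trm ar (env i)" for env
  proof -
    have "eval opsB envB (subst env u) = eval opsB envB (subst env v)"
      if "K B opsB" "\<forall>i. envB i \<in> B" for B opsB envB
      using that e uv env algs eval_closed[of ar B opsB]
      by (fastforce simp: eval_subst idents_of_def holds_def)
    then show ?thesis
      using uv env by (auto simp: idents_of_def idents_def holds_def intro: wf_subst)
  qed
  then show ?thesis
    by (simp add: uv holds_quotient_iff[OF congruence_idents_of is_alg_terms] eval_Op)
qed

text \<open>\<^const>\<open>Id_of\<close> only quantifies over models whose elements are sets of terms. The quotient
  of the term algebra by the identities valid in all models of type \<^typ>\<open>'a\<close> is such a model,
  and through it the identities in \<^const>\<open>Id_of\<close> transfer to models of any type.\<close>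

lemma Id_of_holds:
  fixes X :: "'a set"
  assumes E: "E \<subseteq> idents ar" and e: "e \<in> Id_of ar E" and X: "models ar X ops E"
  shows "holds X ops e"
proof -
  define K where "K = (\<lambda>(B :: 'a set) opsB. models ar B opsB E)"
  let ?\<theta> = "idents_of ar K"
  have algs: "\<And>B opsB. K B opsB \<Longrightarrow> is_alg ar B opsB"
    by (auto simp: K_def models_def)
  have "E \<subseteq> ?\<theta>"
    using E by (auto simp: idents_of_def K_def models_def)
  then have "models ar ({s. wf_trm ar s} // ?\<theta>) (quot_ops ?\<theta> Op) E"
    using holds_term_quotient[OF algs] is_alg_quotient[OF is_alg_terms congruence_idents_of]
    by (auto simp: models_def)
  then have "holds ({s. wf_trm ar s} // ?\<theta>) (quot_ops ?\<theta> Op) e"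
    using e by (auto simp: Id_of_def)
  moreover obtain u v where uv: "e = (u, v)" "wf_trm ar u" "wf_trm ar v"
    using e by (auto simp: Id_of_def idents_def)
  ultimately have "(subst Var u, subst Var v) \<in> ?\<theta>"
    using holds_quotient_iff[OF congruence_idents_of[of ar K] is_alg_terms uv(2,3)]
    by (simp add: eval_Op)
  then have "e \<in> ?\<theta>"
    by (simp add: uv subst_Var)
  then show ?thesis
    using X by (auto simp: idents_of_def K_def)
qed

section \<open>Semilattice sums satisfy the prolonged identities\<close>

lemma semilattice_quotient_related:
  assumes cong: "congruence ar A ops \<theta>" and alg: "is_alg ar A ops"
    and sl: "is_semilattice ar (A // \<theta>) (quot_ops \<theta> ops)"
    and pq: "wf_trm ar p" "wf_trm ar q" "vars p = vars q" and env: "\<forall>i. env i \<in> A"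
  shows "(eval ops env p, eval ops env q) \<in> \<theta>"
proof -
  have "holds (A // \<theta>) (quot_ops \<theta> ops) (p, q)"
    using sl pq by (auto simp: is_semilattice_def models_def regular_idents_def)
  then show ?thesis
    using holds_quotient_iff[OF cong alg pq(1,2)] env by blast
qed

lemma semilattice_quotient_class_is_alg:
  assumes no_nullary: "\<forall>f. ar f \<ge> 1"
    and cong: "congruence ar A ops \<theta>" and alg: "is_alg ar A ops"
    and sl: "is_semilattice ar (A // \<theta>) (quot_ops \<theta> ops)" and X: "X \<in> A // \<theta>"
  shows "is_alg ar X ops"
  unfolding is_alg_def
proof (intro allI impI)
  fix f xs assume xs: "length xs = ar f \<and> set xs \<subseteq> X"
  obtain a where a: "a \<in> A" and Xa: "X = \<theta> `` {a}"
    using X by (auto elim: quotientE)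
  have eqv: "equiv A \<theta>"
    using cong by (simp add: congruence_def)
  have "ar f \<noteq> 0"
    using no_nullary by (metis not_one_le_zero)
  then have idem: "(a, ops f (replicate (ar f) a)) \<in> \<theta>"
    using semilattice_quotient_related[OF cong alg sl, of "Var 0" "Op f (replicate (ar f) (Var 0))" "\<lambda>_. a"]
      a by (simp add: map_replicate_const)
  have "list_all2 (\<lambda>x y. (x, y) \<in> \<theta>) (replicate (ar f) a) xs"
    using xs Xa by (simp add: list_all2_conv_all_nth) (metis Image_singleton_iff nth_mem subsetD)
  moreover have "set xs \<subseteq> A"
    using xs X eqv in_quotient_imp_subset by blast
  ultimately have "(ops f (replicate (ar f) a), ops f xs) \<in> \<theta>"
    using xs a by (intro cong[unfolded congruence_def, THEN conjunct2, rule_format]) auto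
  then have "(a, ops f xs) \<in> \<theta>"
    using idem eqv by (auto elim: equivE transE)
  then show "ops f xs \<in> X"
    using Xa by simp
qed

lemma malcev_S_models_prolong_Id_of:
  fixes A :: "'a set"
  assumes no_nullary: "\<forall>f. ar f \<ge> 1" and E: "E \<subseteq> idents ar" and "malcev_S ar E A ops"
  shows "models ar A ops (prolong ar (Id_of ar E))"
proof -
  have alg: "is_alg ar A ops"
    using assms(3) by (simp add: malcev_S_def)
  obtain \<theta> where cong: "congruence ar A ops \<theta>" and sl: "is_semilattice ar (A // \<theta>) (quot_ops \<theta> ops)"
    and classes: "\<forall>X \<in> A // \<theta>. models ar X ops E"
    using assms(3) by (auto simp: malcev_S_def)
  have "holds A ops (subst r u, subst r v)"
    if uv: "(u, v) \<in> Id_of ar E" and r: "\<forall>i \<in> vars u \<union> vars v. r i \<in> T ar m" for u v r m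
    unfolding holds_def fst_conv snd_conv
  proof (intro allI impI)
    fix env :: "nat \<Rightarrow> 'a" assume env: "\<forall>i. env i \<in> A"
    define S where "S = vars u \<union> vars v"
    have "wf_trm ar u"
      using uv by (simp add: Id_of_def idents_def)
    then obtain i0 where i0: "i0 \<in> S"
      using vars_nonempty[OF no_nullary] unfolding S_def by blast
    have r': "wf_trm ar (r i)" "vars (r i) = {1..m}" if "i \<in> S" for i
      using r that by (auto simp: S_def T_def)
    define X where "X = \<theta> `` {eval ops env (r i0)}"
    have X: "X \<in> A // \<theta>"
      using eval_closed[OF alg r'(1)[OF i0]] env by (simp add: X_def quotientI)
    have in_X: "eval ops env (r i) \<in> X" if "i \<in> S" for i
      using semilattice_quotient_related[OF cong alg sl r'(1)[OF i0] r'(1)[OF that] _ env]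
        r'(2)[OF i0] r'(2)[OF that] by (simp add: X_def)
    define env' where "env' i = (if i \<in> S then eval ops env (r i) else eval ops env (r i0))" for i
    have "holds X ops (u, v)"
      using Id_of_holds[OF E uv] classes X by blast
    then have "eval ops env' u = eval ops env' v"
      using in_X i0 by (auto simp: holds_def env'_def)
    moreover have "eval ops env (subst r w) = eval ops env' w" if "vars w \<subseteq> S" for w
      unfolding eval_subst using that by (intro eval_cong) (auto simp: env'_def)
    ultimately show "eval ops env (subst r u) = eval ops env (subst r v)"
      by (simp add: S_def)
  qed
  then show ?thesis
    using alg by (auto simp: models_def prolong_def)
qed

section \<open>Models of the prolongation are semilattice sums\<close>

definition subst2 :: "'f trm \<Rightarrow> 'f trm \<Rightarrow> 'f trm \<Rightarrow> 'f trm"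
  where "subst2 t p q = subst (\<lambda>i. if i = 1 then p else q) t"

lemma eval_subst2:
  "eval ops env (subst2 t p q) = eval ops (\<lambda>i. if i = 1 then eval ops env p else eval ops env q) t"
  unfolding subst2_def eval_subst by (rule eval_cong) simp

lemma vars_T2:
  assumes "t \<in> T ar 2"
  shows "vars t = {1, 2}"
proof -
  have "{1..2::nat} = {1, 2}" by auto
  then show ?thesis
    using assms by (simp add: T_def)
qed

lemma vars_subst2: "t \<in> T ar 2 \<Longrightarrow> vars (subst2 t p q) = vars p \<union> vars q"
  by (simp add: subst2_def vars_subst vars_T2)

lemma wf_subst2: "t \<in> T ar 2 \<Longrightarrow> wf_trm ar p \<Longrightarrow> wf_trm ar q \<Longrightarrow> wf_trm ar (subst2 t p q)"
  unfolding subst2_def T_def by (auto intro: wf_subst)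

lemma T_nonempty:
  assumes t: "t \<in> T ar 2" and "0 < m"
  shows "T ar m \<noteq> {}"
  using \<open>0 < m\<close>
proof (induction m rule: nat_induct_non_zero)
  case 1
  have "Var 1 \<in> T ar 1"
    by (simp add: T_def)
  then show ?case by blast
next
  case (Suc m)
  then obtain W where "W \<in> T ar m"
    by blast
  then have "subst2 t W (Var (Suc m)) \<in> T ar (Suc m)"
    using t \<open>0 < m\<close> by (auto simp: T_def vars_subst2 wf_subst2)
  then show ?case by blast
qed

definition T_values :: "('f \<Rightarrow> nat) \<Rightarrow> ('f \<Rightarrow> 'a list \<Rightarrow> 'a) \<Rightarrow> nat \<Rightarrow> (nat \<Rightarrow> 'a) \<Rightarrow> 'a set"
  where "T_values ar ops m c = eval ops c ` T ar m"

lemma eval_mem_T_values: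
  assumes p: "wf_trm ar p" and h: "bij_betw h {1..m} (vars p)"
    and c: "\<And>j. j \<in> {1..m} \<Longrightarrow> c j = env (h j)"
  shows "eval ops env p \<in> T_values ar ops m c"
proof -
  let ?\<rho> = "inv_into {1..m} h"
  have \<rho>: "bij_betw ?\<rho> (vars p) {1..m}"
    using bij_betw_inv_into[OF h] .
  then have "subst (Var \<circ> ?\<rho>) p \<in> T ar m"
    using p by (auto simp: T_def vars_subst bij_betw_def intro: wf_subst)
  moreover have "c (?\<rho> i) = env i" if "i \<in> vars p" for i
    using c[OF bij_betw_apply[OF \<rho> that]] bij_betw_inv_into_right[OF h that] by simp
  then have "eval ops c (subst (Var \<circ> ?\<rho>) p) = eval ops env p"
    unfolding eval_subst by (intro eval_cong) simp
  ultimately show ?thesis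
    unfolding T_values_def by (metis image_eqI)
qed

lemma T_values_is_alg:
  assumes no_nullary: "\<forall>f. ar f \<ge> 1"
  shows "is_alg ar (T_values ar ops m c) ops"
  unfolding is_alg_def
proof (intro allI impI)
  fix f xs assume xs: "length xs = ar f \<and> set xs \<subseteq> T_values ar ops m c"
  then have "\<forall>x \<in> set xs. \<exists>r. r \<in> T ar m \<and> eval ops c r = x"
    by (auto simp: T_values_def)
  then obtain r where r: "\<And>x. x \<in> set xs \<Longrightarrow> r x \<in> T ar m \<and> eval ops c (r x) = x"
    by metis
  have "xs \<noteq> []"
    using xs no_nullary by (metis list.size(3) not_one_le_zero)
  then have "Op f (map r xs) \<in> T ar m"
    using xs r by (auto simp: T_def)
  moreover have "ops f xs = eval ops c (Op f (map r xs))"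
    using r by (simp add: map_idI)
  ultimately show "ops f xs \<in> T_values ar ops m c"
    unfolding T_values_def by blast
qed

lemma T_values_models:
  assumes no_nullary: "\<forall>f. ar f \<ge> 1" and A: "models ar A ops (prolong ar E)"
    and "0 < m" and c: "\<forall>i. c i \<in> A"
  shows "models ar (T_values ar ops m c :: 'a set) ops E"
proof -
  have "holds (T_values ar ops m c) ops (u, v)" if uv: "(u, v) \<in> E" for u v
    unfolding holds_def fst_conv snd_conv
  proof (intro allI impI)
    fix env :: "nat \<Rightarrow> 'a" assume "\<forall>i. env i \<in> T_values ar ops m c"
    then have "\<forall>i. \<exists>r. r \<in> T ar m \<and> eval ops c r = env i"
      by (metis T_values_def imageE)
    then obtain r where r: "\<And>i. r i \<in> T ar m" and "\<And>i. eval ops c (r i) = env i"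
      by metis
    then have env: "env = (\<lambda>i. eval ops c (r i))"
      by auto
    have "(subst r u, subst r v) \<in> prolong ar E"
      using uv r \<open>0 < m\<close> by (intro prolongI)
    then have "eval ops c (subst r u) = eval ops c (subst r v)"
      using models_eval_eq[OF A] c by blast
    then show "eval ops env u = eval ops env v"
      by (simp add: env eval_subst)
  qed
  then show ?thesis
    using T_values_is_alg[OF no_nullary] by (auto simp: models_def)
qed

lemma T_values_subset:
  "is_alg ar A ops \<Longrightarrow> (\<And>i. c i \<in> A) \<Longrightarrow> T_values ar ops m c \<subseteq> A"
  by (auto simp: T_values_def T_def intro: eval_closed)

locale prolongation_model =
  fixes ar :: "'f \<Rightarrow> nat" and E :: "('f trm \<times> 'f trm) set" and t :: "'f trm"
    and A :: "'a set" and ops :: "'f \<Rightarrow> 'a list \<Rightarrow> 'a"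
  assumes no_nullary: "\<forall>f. ar f \<ge> 1"
    and E_idents: "E \<subseteq> idents ar"
    and t_T2: "t \<in> T ar 2"
    and t_id: "(t, Var 1) \<in> Id_of ar E"
    and models_prolong: "models ar A ops (prolong ar E)"
begin

lemma is_alg_A: "is_alg ar A ops"
  using models_prolong by (simp add: models_def)

definition t_op :: "'a \<Rightarrow> 'a \<Rightarrow> 'a"
  where "t_op a b = eval ops (\<lambda>i. if i = 1 then a else b) t"

lemma eval_subst2_t_op: "eval ops env (subst2 t p q) = t_op (eval ops env p) (eval ops env q)"
  by (simp add: eval_subst2 t_op_def)

lemma t_op_absorb:
  assumes "0 < m" "\<forall>i. c i \<in> A" and ab: "a \<in> T_values ar ops m c" "b \<in> T_values ar ops m c"
  shows "t_op a b = a"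
proof -
  have "holds (T_values ar ops m c) ops (t, Var 1)"
    using Id_of_holds[OF E_idents t_id T_values_models[OF no_nullary models_prolong assms(1,2)]] .
  then show ?thesis
    using ab by (auto simp: holds_def t_op_def)
qed

definition t_rel :: "'a rel"
  where "t_rel = {(a, b). a \<in> A \<and> b \<in> A \<and> t_op a b = a \<and> t_op b a = b}"

lemma regular_values_t_rel:
  assumes p: "wf_trm ar p" and q: "wf_trm ar q" and pq: "vars p = vars q"
    and env: "\<And>i. i \<in> vars p \<Longrightarrow> env i \<in> A"
  shows "(eval ops env p, eval ops env q) \<in> t_rel"
proof -
  let ?m = "card (vars p)"
  obtain h where h: "bij_betw h {1..?m} (vars p)"
    using ex_bij_betw_nat_finite_1[OF finite_vars] by blast
  have hq: "bij_betw h {1..?m} (vars q)"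
    using h pq by simp
  have m: "0 < ?m"
    using vars_nonempty[OF no_nullary p] finite_vars card_gt_0_iff by blast
  have h1: "h 1 \<in> vars p"
    using h m by (auto intro: bij_betw_apply)
  define c where "c j = (if j \<in> {1..?m} then env (h j) else env (h 1))" for j
  have c: "\<forall>j. c j \<in> A"
    using h1 env bij_betw_apply[OF h] by (simp add: c_def)
  have "eval ops env p \<in> T_values ar ops ?m c" "eval ops env q \<in> T_values ar ops ?m c"
    using eval_mem_T_values[OF p h, of c env ops] eval_mem_T_values[OF q hq, of c env ops]
    by (simp_all add: c_def)
  then show ?thesis
    using t_op_absorb[OF m c] T_values_subset[OF is_alg_A] c unfolding t_rel_def by blast
qed

lemma equiv_t_rel: "equiv A t_rel"
proof (rule equivI)
  show "t_rel \<subseteq> A \<times> A"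
    by (auto simp: t_rel_def)
  show "refl_on A t_rel"
    using regular_values_t_rel[of "Var 0" "Var 0" "\<lambda>_. _"] t_rel_def by (auto simp: refl_on_def)
  show "sym t_rel"
    by (auto simp: t_rel_def intro: symI)
  show "trans t_rel"
  proof (rule transI)
    fix a b d assume ab: "(a, b) \<in> t_rel" and bd: "(b, d) \<in> t_rel"
    define env where "env i = (if i = 0 then a else if i = 1 then b else d)" for i :: nat
    let ?P = "subst2 t (subst2 t (Var 0) (Var 1)) (subst2 t (Var 1) (Var 2))"
    let ?Q = "subst2 t (subst2 t (Var 2) (Var 1)) (subst2 t (Var 1) (Var 0))"
    have "(eval ops env ?P, eval ops env ?Q) \<in> t_rel"
      using ab bd t_T2
      by (intro regular_values_t_rel) (auto simp: vars_subst2 wf_subst2 env_def t_rel_def)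
    moreover have "eval ops env ?P = a" "eval ops env ?Q = d"
      using ab bd by (simp_all add: eval_subst2_t_op env_def t_rel_def)
    ultimately show "(a, d) \<in> t_rel"
      by simp
  qed
qed

lemma congruence_t_rel: "congruence ar A ops t_rel"
  unfolding congruence_def
proof (intro conjI allI impI equiv_t_rel)
  fix f xs ys
  assume "length xs = ar f \<and> length ys = ar f \<and> set xs \<subseteq> A \<and> set ys \<subseteq> A
    \<and> list_all2 (\<lambda>x y. (x, y) \<in> t_rel) xs ys"
  then have len: "length xs = ar f" "length ys = ar f" and A: "set xs \<subseteq> A" "set ys \<subseteq> A"
    and rel: "\<And>i. i < ar f \<Longrightarrow> (xs ! i, ys ! i) \<in> t_rel"
    by (auto simp: list_all2_conv_all_nth)
  let ?k = "ar f"
  define env where "env i = (if i < ?k then xs ! i else ys ! (i - ?k))" for i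
  let ?P = "Op f (map (\<lambda>i. subst2 t (Var i) (Var (?k + i))) [0..<?k])"
  let ?Q = "Op f (map (\<lambda>i. subst2 t (Var (?k + i)) (Var i)) [0..<?k])"
  have vars: "vars ?Q = vars ?P" "vars ?P \<subseteq> {..<2 * ?k}"
    using t_T2 by (auto simp: vars_subst2)
  have "env i \<in> A" if "i < 2 * ?k" for i
    using that len A by (auto simp: env_def dest!: nth_mem)
  then have "(eval ops env ?P, eval ops env ?Q) \<in> t_rel"
    using vars t_T2 by (intro regular_values_t_rel) (auto simp: wf_subst2)
  moreover have "eval ops env ?P = ops f (map (\<lambda>i. t_op (xs ! i) (ys ! i)) [0..<?k])"
    "eval ops env ?Q = ops f (map (\<lambda>i. t_op (ys ! i) (xs ! i)) [0..<?k])"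
    by (auto simp: eval_subst2_t_op env_def intro!: arg_cong[where f = "ops f"])
  moreover have "map (\<lambda>i. t_op (xs ! i) (ys ! i)) [0..<?k] = xs"
    "map (\<lambda>i. t_op (ys ! i) (xs ! i)) [0..<?k] = ys"
    using rel len by (auto simp: t_rel_def intro!: nth_equalityI)
  ultimately show "(ops f xs, ops f ys) \<in> t_rel"
    by simp
qed

lemma semilattice_quotient_t_rel: "is_semilattice ar (A // t_rel) (quot_ops t_rel ops)"
  unfolding is_semilattice_def models_def
  using is_alg_quotient[OF is_alg_A congruence_t_rel] holds_quotient_iff[OF congruence_t_rel is_alg_A]
    regular_values_t_rel
  by (auto simp: regular_idents_def)

lemma t_rel_class_models:
  assumes X: "X \<in> A // t_rel"
  shows "models ar X ops E"
proof -
  have X_alg: "is_alg ar X ops"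
    using semilattice_quotient_class_is_alg[OF no_nullary congruence_t_rel is_alg_A
        semilattice_quotient_t_rel X] .
  have X_A: "X \<subseteq> A"
    using in_quotient_imp_subset[OF equiv_t_rel X] .
  have absorb: "t_op x y = x" if "x \<in> X" "y \<in> X" for x y
    using in_quotient_imp_in_rel[OF equiv_t_rel X] that by (auto simp: t_rel_def)
  have "holds X ops (u, v)" if uv: "(u, v) \<in> E" for u v
    unfolding holds_def fst_conv snd_conv
  proof (intro allI impI)
    fix env :: "nat \<Rightarrow> 'a" assume env: "\<forall>i. env i \<in> X"
    obtain k where k: "\<forall>i \<in> vars u \<union> vars v. i \<le> k"
      using finite_nat_set_iff_bounded_le finite_vars by (metis finite_Un)
    obtain W where W: "W \<in> T ar (Suc k)"
      using T_nonempty[OF t_T2] by blast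
    define c where "c j = env (j - 1)" for j
    \<comment> \<open>\<open>r i = t(x\<^sub>i\<^sub>+\<^sub>1, W)\<close> lies in \<open>T\<^sub>k\<^sub>+\<^sub>1\<close>, and since \<open>t(a, b) = a\<close> inside a class,
      it evaluates to \<open>env i\<close> under the shifted valuation \<open>c\<close>.\<close>
    define r where "r i = subst2 t (Var (Suc i)) W" for i
    have "r i \<in> T ar (Suc k)" if "i \<in> vars u \<union> vars v" for i
      using W k that t_T2 by (auto simp: r_def T_def vars_subst2 wf_subst2)
    then have "(subst r u, subst r v) \<in> prolong ar E"
      using uv by (intro prolongI) auto
    moreover have "c j \<in> A" for j
      using env X_A by (auto simp: c_def)
    ultimately have "eval ops c (subst r u) = eval ops c (subst r v)"
      by (rule models_eval_eq[OF models_prolong])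
    moreover have "eval ops c (r i) = env i" for i
    proof -
      have "eval ops c W \<in> X"
        using eval_closed[OF X_alg] W env by (auto simp: T_def c_def)
      then show ?thesis
        using absorb env by (simp add: r_def eval_subst2_t_op c_def)
    qed
    ultimately show "eval ops env u = eval ops env v"
      by (simp add: eval_subst)
  qed
  then show ?thesis
    using X_alg by (auto simp: models_def)
qed

lemma malcev_S: "malcev_S ar E A ops"
  unfolding malcev_S_def
  using is_alg_A congruence_t_rel semilattice_quotient_t_rel t_rel_class_models by blast

end

theorem theorem5p4:
  fixes ar :: "'f \<Rightarrow> nat" and \<Sigma> :: "('f trm \<times> 'f trm) set" and t :: "'f trm"
  assumes no_nullary: "\<forall>f. ar f \<ge> 1"
      and plural: "\<exists>f. ar f \<ge> 2"
      and Sigma_idents: "\<Sigma> \<subseteq> idents ar"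
      and t_T2: "t \<in> T ar 2"
      and t_id: "(t, Var 1) \<in> Id_of ar \<Sigma>"
  shows "(\<forall>(A :: 'a set) ops. malcev_S ar \<Sigma> A ops \<longleftrightarrow> models ar A ops (prolong ar (Id_of ar \<Sigma>)))
       \<and> (\<forall>(A :: 'a set) ops. malcev_S ar \<Sigma> A ops \<longleftrightarrow> models ar A ops (prolong ar \<Sigma>))"
proof -
  have "prolong ar \<Sigma> \<subseteq> prolong ar (Id_of ar \<Sigma>)"
    using subset_Id_of[OF Sigma_idents] by (rule prolong_mono)
  moreover have "malcev_S ar \<Sigma> A ops \<Longrightarrow> models ar A ops (prolong ar (Id_of ar \<Sigma>))"
    for A :: "'a set" and ops
    by (rule malcev_S_models_prolong_Id_of[OF no_nullary Sigma_idents])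
  moreover have "models ar A ops (prolong ar \<Sigma>) \<Longrightarrow> malcev_S ar \<Sigma> A ops"
    for A :: "'a set" and ops
    by (rule prolongation_model.malcev_S[OF prolongation_model.intro[OF no_nullary Sigma_idents t_T2 t_id]])
  ultimately show ?thesis
    using models_antimono by blast
qed

end
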